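(* Let $\gamma=(\mathcal E,\mathcal F,\pi)$ be an EBA context whose failure model satisfies $\mathcal F\subseteq SO(t)$. Then every action protocol $P$ that implements the knowledge-based program $\mathbf P^0$ in $\gamma$ is an EBA decision protocol for $\gamma$. Moreover, in every run of $\mathcal I_{\gamma,P}$ every nonfaulty agent decides by round $t+2$ (i.e. after at most $t+1$ rounds of message exchange), and Validity holds even for faulty agents: if any agent (faulty or not) decides $v$, then $\mathit{init}_j=v$ for some agent $j$.
   Context: Agents and runs. There are $n$ agents $\mathit{Agt}=\{1,\ldots,n\}$; time is $m\in\mathbb N$, and round $m+1$ is the step from time $m$ to time $m+1$. An information-exchange protocol $\mathcal E$ specifies for each agent $i$: a set $L_i$ of local states, a set $I_i\subseteq L_i$ of initial states, a set $A_i$ of actions, a set $M_i$ of messages, a function giving for $s\in L_i$, $a\in A_i$ and each agent $j$ the message $\mu_{ij}(s,a)\in M_i\cup\{\bot\}$ that $i$ sends to $j$ ($\bot$ means no message), and a transition function $\delta_i:L_i\times A_i\times\prod_j(M_j\cup\{\bot\})\to L_i$. A failure pattern is a pair $(\mathcal N,F)$ with $\mathcal N\subseteq\mathit{Agt}$ (the nonfaulty agents) and $F:\mathbb N\times\mathit{Agt}\times\mathit{Agt}\to\{0,1\}$, where $F(m,i,j)=0$ means the message from $i$ to $j$ in round $m+1$ is lost. The sending-omissions failure model $SO(t)$ ($t<n$) is the set of failure patterns with $|\mathit{Agt}\setminus\mathcal N|\le t$ such that $F(m,i,j)=0$ implies $i\notin\mathcal N$. An action protocol $P$ gives each agent $i$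 a map $P_i:L_i\to A_i$. Given $\mathcal E$, a failure model $\mathcal F$ and $P$, each initial global state (a failure pattern $(\mathcal N,F)\in\mathcal F$ and an $s_i\in I_i$ for each $i$) determines a unique run $r$: if $r_i(k)$ is $i$'s local state at time $k$, then $i$ performs $a_i=P_i(r_i(k))$, agent $j$ receives $m'_{ij}=\mu_{ij}(r_i(k),a_i)$ if $F(k,i,j)=1$ and $\bot$ otherwise, and $r_i(k+1)=\delta_i(r_i(k),a_i,(m'_{1i},\ldots,m'_{ni}))$; the failure pattern is fixed in the run and $\mathcal N(r)$ denotes its nonfaulty set. $\mathcal R_{\mathcal E,\mathcal F,P}$ is the set of all such runs. Agent $i$ decides $v$ in round $k$ of $r$ if $P_i(r_i(k-1))=\mathtt{decide}_i(v)$. An interpreted system $\mathcal I=(\mathcal R,\pi)$ is a set of runs with an interpretation $\pi$ of primitive propositions at points $(r,m)$. $\mathcal I,(r,m)\models K_i\varphi$ iff $\varphi$ holds at all points $(r',m')$ of $\mathcal I$ with $r'_i(m')=r_i(m)$; $\bigcirc\varphi$ holds at $(r,m)$ iff $\varphi$ holds at $(r,m+1)$; $\ominus\varphi$ holds at $(r,m)$ iff $m>0$ and $\varphi$ holds at $(r,m-1)$; $\mathcal I\models\varphi$ means $\varphi$ holds at all points. EBA contexts. An EBA context is a tuple $\gamma=(\mathcal E,\mathcal F,\pi)$ such that: each $A_i=\{\mathtt{decide}_i(0),\mathtt{decide}_i(1),\mathtt{noop}\}$; local states have the form $\langle \mathit{time}_i,\mathit{init}_i,\mathit{decided}_i,\mathit{rd}_i,\ldots\rangle$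 with $\mathit{time}_i\in\mathbb N$, $\mathit{init}_i\in\{0,1\}$ (initial preference), $\mathit{decided}_i,\mathit{rd}_i\in\{0,1,\bot\}$; initial states have the form $\langle 0,\mathit{init}_i,\bot,\bot,\ldots\rangle$; there are pairwise disjoint sets $M^0,M^1,M^2$ with $\bot\notin M^0\cup M^1$ such that an agent performing $\mathtt{decide}_i(0)$ (resp. $\mathtt{decide}_i(1)$, resp. $\mathtt{noop}$) sends every agent a message in $M^0$ (resp. $M^1$, resp. $M^2$); $\delta_i$ increments $\mathit{time}_i$, sets $\mathit{decided}_i:=v$ if the action is $\mathtt{decide}_i(v)$ (otherwise leaves it unchanged), and sets $\mathit{rd}_i$ to $0$ (resp. $1$) if in that round $i$ received a message from an agent performing $\mathtt{decide}(0)$ (resp. $\mathtt{decide}(1)$), and to $\bot$ otherwise; $\pi$ interprets $\mathit{init}_i=v$, $\mathit{decided}_i=v$, $\mathit{time}_i=k$ by reading $i$'s local state, and $i\in\mathcal N$ as true at $(r,m)$ iff $i\in\mathcal N(r)$. Abbreviations: $\mathit{jdecided}_i=v$ is $\mathit{decided}_i=v\wedge\ominus(\mathit{decided}_i=\bot)$; $\mathit{deciding}_i=v$ is $\mathit{decided}_i=\bot\wedge\bigcirc(\mathit{decided}_i=v)$; $\exists v$ is $\bigvee_j \mathit{init}_j=v$. For an action protocol $P$, $\mathcal I_{\gamma,P}=(\mathcal R_{\mathcal E,\mathcal F,P},\pi)$. $P$ is an EBA decision protocol for $\gamma$ if in every run of $\mathcal I_{\gamma,P}$: (Unique Decision) no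 agent decides $v$ and later decides $1-v$; (Agreement) no two nonfaulty agents decide different values; (Validity) if a nonfaulty agent decides $v$ then $\mathit{init}_j=v$ for some $j$; (Termination) every nonfaulty agent eventually decides. Knowledge-based programs. A knowledge-based program $\mathbf P=(\mathbf P_1,\ldots,\mathbf P_n)$ has each $\mathbf P_i$ generated by $\mathbf P_i::=a\mid\text{if }\varphi\text{ then }\mathbf P_i\text{ else }\mathbf P_i$ with $a\in A_i$ and each test $\varphi$ a Boolean combination of formulas $K_i\psi$ and propositions determined by $i$'s local state; its truth at a point depends only on $i$'s local state. Given $\mathcal I$ and a local state $s$ of $i$, $\mathbf P_i^{\mathcal I}(s)$ is the action obtained by evaluating the tests at $s$ in $\mathcal I$. An action protocol $P$ implements $\mathbf P$ in $\gamma$ if $P_i(s)=\mathbf P_i^{\mathcal I}(s)$ for every $i$ and every local state $s$ of $i$ arising in $\mathcal I=\mathcal I_{\gamma,P}$. The program $\mathbf P^0$: for each agent $i$, $\mathbf P^0_i$ is: if $\mathit{decided}_i\neq\bot$ then $\mathtt{noop}$; else if $\mathit{init}_i=0\vee K_i(\bigvee_{j\in\mathit{Agt}}\mathit{jdecided}_j=0)$ then $\mathtt{decide}_i(0)$; else if $K_i(\bigwedge_{j\in\mathit{Agt}}\neg(\mathit{deciding}_j=0))$ then $\mathtt{decide}_i(1)$; else $\mathtt{noop}$. *)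

theory Defs
  imports Main
begin

type_synonym agent = nat

definition Agt :: "nat \<Rightarrow> agent set" where
  "Agt n = {1..n}"

datatype bval = V0 | V1

datatype act = Decide bval | Noop

text \<open>A failure pattern (N, F): N is the set of nonfaulty agents; F m i j = False
  means the message from i to j in round m+1 is lost.\<close>
type_synonym fpattern = "agent set \<times> (nat \<Rightarrow> agent \<Rightarrow> agent \<Rightarrow> bool)"

definition SO :: "nat \<Rightarrow> nat \<Rightarrow> fpattern set" where
  "SO n t = {(N, F). N \<subseteq> Agt n \<and> card (Agt n - N) \<le> t
                     \<and> (\<forall>m i j. \<not> F m i j \<longrightarrow> i \<notin> N)}"

text \<open>Local states of all agents live in one type 's (with L_i = the whole type);
  messages in 'm, with None playing the role of bot.\<close>
record ('s, 'm) eba_ctx =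
  Init      :: "agent \<Rightarrow> 's set"
  Msg       :: "agent \<Rightarrow> agent \<Rightarrow> 's \<Rightarrow> act \<Rightarrow> 'm option"
  Trans     :: "agent \<Rightarrow> 's \<Rightarrow> act \<Rightarrow> (agent \<Rightarrow> 'm option) \<Rightarrow> 's"
  ltime     :: "'s \<Rightarrow> nat"
  linit     :: "'s \<Rightarrow> bval"
  ldecided  :: "'s \<Rightarrow> bval option"
  lrd       :: "'s \<Rightarrow> bval option"
  FM        :: "fpattern set"

definition is_eba_ctx :: "nat \<Rightarrow> ('s, 'm) eba_ctx \<Rightarrow> bool" where
  "is_eba_ctx n C \<longleftrightarrow>
     (\<exists>(M0 :: 'm set) (M1 :: 'm set) (M2 :: 'm option set).
        Some ` M0 \<inter> Some ` M1 = {} \<and> Some ` M0 \<inter> M2 = {} \<and> Some ` M1 \<inter> M2 = {} \<and>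
        (\<forall>i\<in>Agt n. \<forall>s\<in>Init C i. ltime C s = 0 \<and> ldecided C s = None \<and> lrd C s = None) \<and>
        (\<forall>i\<in>Agt n. \<forall>j\<in>Agt n. \<forall>s.
            Msg C i j s (Decide V0) \<in> Some ` M0 \<and>
            Msg C i j s (Decide V1) \<in> Some ` M1 \<and>
            Msg C i j s Noop \<in> M2) \<and>
        (\<forall>i\<in>Agt n. \<forall>s a ms.
            ltime C (Trans C i s a ms) = Suc (ltime C s) \<and>
            linit C (Trans C i s a ms) = linit C s \<and>
            ldecided C (Trans C i s a ms) =
              (case a of Decide v \<Rightarrow> Some v | Noop \<Rightarrow> ldecided C s) \<and>
            ((\<exists>j\<in>Agt n. ms j \<in> Some ` M0) \<and> \<not> (\<exists>j\<in>Agt n. ms j \<in> Some ` M1)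
               \<longrightarrow> lrd C (Trans C i s a ms) = Some V0) \<and>
            ((\<exists>j\<in>Agt n. ms j \<in> Some ` M1) \<and> \<not> (\<exists>j\<in>Agt n. ms j \<in> Some ` M0)
               \<longrightarrow> lrd C (Trans C i s a ms) = Some V1) \<and>
            (\<not> (\<exists>j\<in>Agt n. ms j \<in> Some ` M0) \<and> \<not> (\<exists>j\<in>Agt n. ms j \<in> Some ` M1)
               \<longrightarrow> lrd C (Trans C i s a ms) = None)))"

primrec gst :: "nat \<Rightarrow> ('s, 'm) eba_ctx \<Rightarrow> (agent \<Rightarrow> 's \<Rightarrow> act) \<Rightarrow> fpattern
                 \<Rightarrow> (agent \<Rightarrow> 's) \<Rightarrow> nat \<Rightarrow> agent \<Rightarrow> 's" where
  "gst n C P fp s0 0 = s0"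
| "gst n C P fp s0 (Suc k) =
     (\<lambda>i. Trans C i (gst n C P fp s0 k i) (P i (gst n C P fp s0 k i))
           (\<lambda>j. if j \<in> Agt n \<and> snd fp k j i
                then Msg C j i (gst n C P fp s0 k j) (P j (gst n C P fp s0 k j))
                else None))"

type_synonym 's run = "fpattern \<times> (nat \<Rightarrow> agent \<Rightarrow> 's)"

definition runs :: "nat \<Rightarrow> ('s, 'm) eba_ctx \<Rightarrow> (agent \<Rightarrow> 's \<Rightarrow> act) \<Rightarrow> 's run set" where
  "runs n C P = {(fp, gst n C P fp s0) | fp s0.
                   fp \<in> FM C \<and> (\<forall>i\<in>Agt n. s0 i \<in> Init C i)}"

definition loc :: "'s run \<Rightarrow> agent \<Rightarrow> nat \<Rightarrow> 's" where
  "loc r i m = snd r m i"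

definition nonfaulty :: "'s run \<Rightarrow> agent set" where
  "nonfaulty r = fst (fst r)"

definition Kn :: "'s run set \<Rightarrow> agent \<Rightarrow> ('s run \<Rightarrow> nat \<Rightarrow> bool) \<Rightarrow> 's \<Rightarrow> bool" where
  "Kn R i \<phi> s \<longleftrightarrow> (\<forall>r'\<in>R. \<forall>m'. loc r' i m' = s \<longrightarrow> \<phi> r' m')"

definition jdecided :: "('s, 'm) eba_ctx \<Rightarrow> agent \<Rightarrow> bval \<Rightarrow> 's run \<Rightarrow> nat \<Rightarrow> bool" where
  "jdecided C j v r m \<longleftrightarrow>
     ldecided C (loc r j m) = Some v \<and> m > 0 \<and> ldecided C (loc r j (m - 1)) = None"

definition deciding :: "('s, 'm) eba_ctx \<Rightarrow> agent \<Rightarrow> bval \<Rightarrow> 's run \<Rightarrow> nat \<Rightarrow> bool" where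
  "deciding C j v r m \<longleftrightarrow>
     ldecided C (loc r j m) = None \<and> ldecided C (loc r j (Suc m)) = Some v"

definition P0 :: "nat \<Rightarrow> ('s, 'm) eba_ctx \<Rightarrow> 's run set \<Rightarrow> agent \<Rightarrow> 's \<Rightarrow> act" where
  "P0 n C R i s =
     (if ldecided C s \<noteq> None then Noop
      else if linit C s = V0 \<or> Kn R i (\<lambda>r m. \<exists>j\<in>Agt n. jdecided C j V0 r m) s
        then Decide V0
      else if Kn R i (\<lambda>r m. \<forall>j\<in>Agt n. \<not> deciding C j V0 r m) s
        then Decide V1
      else Noop)"

definition implements :: "nat \<Rightarrow> ('s, 'm) eba_ctx \<Rightarrow> (agent \<Rightarrow> 's \<Rightarrow> act) \<Rightarrow> bool" where
  "implements n C P \<longleftrightarrow>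
     (\<forall>i\<in>Agt n. \<forall>r\<in>runs n C P. \<forall>m.
        P i (loc r i m) = P0 n C (runs n C P) i (loc r i m))"

definition decides :: "(agent \<Rightarrow> 's \<Rightarrow> act) \<Rightarrow> 's run \<Rightarrow> agent \<Rightarrow> bval \<Rightarrow> nat \<Rightarrow> bool" where
  "decides P r i v k \<longleftrightarrow> k \<ge> 1 \<and> P i (loc r i (k - 1)) = Decide v"

definition is_EBA_protocol :: "nat \<Rightarrow> ('s, 'm) eba_ctx \<Rightarrow> (agent \<Rightarrow> 's \<Rightarrow> act) \<Rightarrow> bool" where
  "is_EBA_protocol n C P \<longleftrightarrow>
     (\<forall>r\<in>runs n C P.
        (\<forall>i\<in>Agt n. \<forall>v w k k'. decides P r i v k \<and> decides P r i w k' \<and> k < k' \<longrightarrow> w = v) \<and>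
        (\<forall>i\<in>Agt n \<inter> nonfaulty r. \<forall>j\<in>Agt n \<inter> nonfaulty r. \<forall>v w k k'.
            decides P r i v k \<and> decides P r j w k' \<longrightarrow> v = w) \<and>
        (\<forall>i\<in>Agt n \<inter> nonfaulty r. \<forall>v k.
            decides P r i v k \<longrightarrow> (\<exists>j\<in>Agt n. linit C (loc r j 0) = v)) \<and>
        (\<forall>i\<in>Agt n \<inter> nonfaulty r. \<exists>k v. decides P r i v k))"

end

theory Submission
  imports Defs
begin

text \<open>Decisions on 0 travel along a chain: an agent with initial preference 1 decides 0 only
  after learning of a fresh 0-decision, so if some agent decides 0 in round m+1, then in every
  earlier round some agent decided 0. An agent that has not decided by time t+1 considers
  possible a run in which some agent is just deciding 0 at time t+1; the chain in that run
  consists of t+1 distinct agents, one per round, so one of them is nonfaulty, and its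
  0-message would already have forced the agent to decide. For agreement, a 1-decision in
  round m+1 requires knowing that nobody decides 0 in that round: a nonfaulty 0-decision in
  an earlier round would have reached the agent and made it decide 0, and one in a later
  round would by the chain entail a 0-decision in round m+1.\<close>

definition received ::
    "nat \<Rightarrow> ('s, 'm) eba_ctx \<Rightarrow> (agent \<Rightarrow> 's \<Rightarrow> act) \<Rightarrow> 's run \<Rightarrow> nat \<Rightarrow> agent \<Rightarrow> agent \<Rightarrow> 'm option"
  where
  "received n C P r m i j =
     (if j \<in> Agt n \<and> snd (fst r) m j i then Msg C j i (loc r j m) (P j (loc r j m)) else None)"

lemma KnD: "Kn R i \<phi> (loc r i m) \<Longrightarrow> r \<in> R \<Longrightarrow> \<phi> r m"
  unfolding Kn_def by blast

lemma P0_eq_Decide_V0_iff: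
  "P0 n C R i s = Decide V0 \<longleftrightarrow>
     ldecided C s = None \<and> (linit C s = V0 \<or> Kn R i (\<lambda>r m. \<exists>j\<in>Agt n. jdecided C j V0 r m) s)"
  unfolding P0_def by auto

lemma P0_eq_Decide_V1_iff:
  "P0 n C R i s = Decide V1 \<longleftrightarrow>
     ldecided C s = None \<and> linit C s = V1 \<and> \<not> Kn R i (\<lambda>r m. \<exists>j\<in>Agt n. jdecided C j V0 r m) s
     \<and> Kn R i (\<lambda>r m. \<forall>j\<in>Agt n. \<not> deciding C j V0 r m) s"
  unfolding P0_def by (cases "linit C s") auto

lemma P0_eq_Noop_iff:
  "P0 n C R i s = Noop \<longleftrightarrow>
     ldecided C s \<noteq> None \<or> (linit C s = V1 \<and> \<not> Kn R i (\<lambda>r m. \<exists>j\<in>Agt n. jdecided C j V0 r m) s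
       \<and> \<not> Kn R i (\<lambda>r m. \<forall>j\<in>Agt n. \<not> deciding C j V0 r m) s)"
  unfolding P0_def by (cases "linit C s") auto

locale eba_system =
  fixes n t :: nat and C :: "('s, 'm) eba_ctx" and P :: "agent \<Rightarrow> 's \<Rightarrow> act"
    and M0 M1 :: "'m set" and M2 :: "'m option set"
  assumes disjoint_M0_M1: "Some ` M0 \<inter> Some ` M1 = {}"
    and disjoint_M0_M2: "Some ` M0 \<inter> M2 = {}"
    and disjoint_M1_M2: "Some ` M1 \<inter> M2 = {}"
    and Init_state: "\<lbrakk>i \<in> Agt n; s \<in> Init C i\<rbrakk> \<Longrightarrow>
                       ltime C s = 0 \<and> ldecided C s = None \<and> lrd C s = None"
    and Msg_Decide_V0: "\<lbrakk>i \<in> Agt n; j \<in> Agt n\<rbrakk> \<Longrightarrow> Msg C i j s (Decide V0) \<in> Some ` M0"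
    and Msg_Decide_V1: "\<lbrakk>i \<in> Agt n; j \<in> Agt n\<rbrakk> \<Longrightarrow> Msg C i j s (Decide V1) \<in> Some ` M1"
    and Msg_Noop: "\<lbrakk>i \<in> Agt n; j \<in> Agt n\<rbrakk> \<Longrightarrow> Msg C i j s Noop \<in> M2"
    and ltime_Trans: "i \<in> Agt n \<Longrightarrow> ltime C (Trans C i s a ms) = Suc (ltime C s)"
    and linit_Trans: "i \<in> Agt n \<Longrightarrow> linit C (Trans C i s a ms) = linit C s"
    and ldecided_Trans: "i \<in> Agt n \<Longrightarrow>
          ldecided C (Trans C i s a ms) = (case a of Decide v \<Rightarrow> Some v | Noop \<Rightarrow> ldecided C s)"
    and lrd_Trans_V0: "\<lbrakk>i \<in> Agt n; \<exists>j\<in>Agt n. ms j \<in> Some ` M0; \<not> (\<exists>j\<in>Agt n. ms j \<in> Some ` M1)\<rbrakk>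
          \<Longrightarrow> lrd C (Trans C i s a ms) = Some V0"
    and lrd_Trans_V1: "\<lbrakk>i \<in> Agt n; \<exists>j\<in>Agt n. ms j \<in> Some ` M1; \<not> (\<exists>j\<in>Agt n. ms j \<in> Some ` M0)\<rbrakk>
          \<Longrightarrow> lrd C (Trans C i s a ms) = Some V1"
    and lrd_Trans_None: "\<lbrakk>i \<in> Agt n; \<not> (\<exists>j\<in>Agt n. ms j \<in> Some ` M0); \<not> (\<exists>j\<in>Agt n. ms j \<in> Some ` M1)\<rbrakk>
          \<Longrightarrow> lrd C (Trans C i s a ms) = None"
    and failure_model: "FM C \<subseteq> SO n t"
    and implements: "implements n C P"
begin

abbreviation R :: "'s run set" where "R \<equiv> runs n C P"

lemma runsE:
  assumes "r \<in> R"
  obtains fp s0 where "r = (fp, gst n C P fp s0)" "fp \<in> FM C" "\<forall>i\<in>Agt n. s0 i \<in> Init C i"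
  using assms unfolding runs_def by blast

lemma loc_Suc:
  "r \<in> R \<Longrightarrow> loc r i (Suc m) = Trans C i (loc r i m) (P i (loc r i m)) (received n C P r m i)"
  by (erule runsE) (simp add: loc_def received_def[abs_def] cong: if_cong)

lemma loc_0_in_Init: "r \<in> R \<Longrightarrow> i \<in> Agt n \<Longrightarrow> loc r i 0 \<in> Init C i"
  by (erule runsE) (simp add: loc_def)

lemma ltime_loc: "r \<in> R \<Longrightarrow> i \<in> Agt n \<Longrightarrow> ltime C (loc r i m) = m"
  by (induction m) (simp_all add: Init_state loc_0_in_Init loc_Suc ltime_Trans)

lemma linit_loc: "r \<in> R \<Longrightarrow> i \<in> Agt n \<Longrightarrow> linit C (loc r i m) = linit C (loc r i 0)"
  by (induction m) (simp_all add: loc_Suc linit_Trans)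

lemma ldecided_loc_0: "r \<in> R \<Longrightarrow> i \<in> Agt n \<Longrightarrow> ldecided C (loc r i 0) = None"
  by (simp add: Init_state loc_0_in_Init)

lemma lrd_loc_0: "r \<in> R \<Longrightarrow> i \<in> Agt n \<Longrightarrow> lrd C (loc r i 0) = None"
  by (simp add: Init_state loc_0_in_Init)

lemma ldecided_loc_Suc:
  "r \<in> R \<Longrightarrow> i \<in> Agt n \<Longrightarrow> ldecided C (loc r i (Suc m)) =
     (case P i (loc r i m) of Decide v \<Rightarrow> Some v | Noop \<Rightarrow> ldecided C (loc r i m))"
  by (simp add: loc_Suc ldecided_Trans)

lemma nonfaulty_delivers: "r \<in> R \<Longrightarrow> j \<in> nonfaulty r \<Longrightarrow> snd (fst r) m j i"
  by (elim runsE) (fastforce simp: SO_def nonfaulty_def dest!: subsetD[OF failure_model])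

lemma card_faulty_le: "r \<in> R \<Longrightarrow> card (Agt n - nonfaulty r) \<le> t"
  by (elim runsE) (auto simp: SO_def nonfaulty_def dest!: subsetD[OF failure_model])

lemma P_eq_P0: "r \<in> R \<Longrightarrow> i \<in> Agt n \<Longrightarrow> P i (loc r i m) = P0 n C R i (loc r i m)"
  using implements unfolding implements_def by blast

lemma undecided_if_Decide:
  "r \<in> R \<Longrightarrow> i \<in> Agt n \<Longrightarrow> P i (loc r i m) = Decide v \<Longrightarrow> ldecided C (loc r i m) = None"
  using P_eq_P0[of r i m] unfolding P0_def by (auto split: if_splits)

lemma ldecided_mono:
  assumes "r \<in> R" "i \<in> Agt n" "ldecided C (loc r i m) \<noteq> None" "m \<le> m'"
  shows "ldecided C (loc r i m') \<noteq> None"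
  using assms(4,3) by (induction m' rule: dec_induct)
    (auto simp: ldecided_loc_Suc assms(1,2) split: act.split)

lemma decide_at_most_once:
  assumes "r \<in> R" "i \<in> Agt n" "P i (loc r i a) = Decide v" "P i (loc r i b) = Decide w"
  shows "a = b"
proof (rule ccontr)
  have later_undecided: False if "P i (loc r i x) = Decide u" "P i (loc r i y) = Decide u'" "x < y"
    for x y u u'
    using that ldecided_mono[of r i "Suc x" y] ldecided_loc_Suc[of r i x]
      undecided_if_Decide[of r i y u'] assms(1,2) by simp
  assume "a \<noteq> b"
  then show False
    using later_undecided[of a v b w] later_undecided[of b w a v] assms(3,4) by linarith
qed

lemma deciding_iff: "r \<in> R \<Longrightarrow> j \<in> Agt n \<Longrightarrow> deciding C j v r m \<longleftrightarrow> P j (loc r j m) = Decide v"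
  unfolding deciding_def using undecided_if_Decide[of r j m v]
  by (auto simp: ldecided_loc_Suc split: act.split)

lemma jdecided_Suc_iff:
  "r \<in> R \<Longrightarrow> j \<in> Agt n \<Longrightarrow> jdecided C j v r (Suc m) \<longleftrightarrow> P j (loc r j m) = Decide v"
  using deciding_iff[of r j v m] unfolding jdecided_def deciding_def by auto

lemma decided_imp_Decide_before:
  "r \<in> R \<Longrightarrow> i \<in> Agt n \<Longrightarrow> ldecided C (loc r i m) \<noteq> None \<Longrightarrow> \<exists>m0<m. \<exists>v. P i (loc r i m0) = Decide v"
  by (induction m) (auto simp: ldecided_loc_0 ldecided_loc_Suc less_Suc_eq split: act.splits)

lemma Msg_in_M0_iff:
  assumes "i \<in> Agt n" "j \<in> Agt n"
  shows "Msg C i j s a \<in> Some ` M0 \<longleftrightarrow> a = Decide V0"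
proof (cases a)
  case (Decide v)
  then show ?thesis
    using Msg_Decide_V0[OF assms] Msg_Decide_V1[OF assms] disjoint_M0_M1
    by (cases v) (auto simp: disjoint_iff)
next
  case Noop
  then show ?thesis using Msg_Noop[OF assms] disjoint_M0_M2 by (auto simp: disjoint_iff)
qed

lemma Msg_in_M1_iff:
  assumes "i \<in> Agt n" "j \<in> Agt n"
  shows "Msg C i j s a \<in> Some ` M1 \<longleftrightarrow> a = Decide V1"
proof (cases a)
  case (Decide v)
  then show ?thesis
    using Msg_Decide_V0[OF assms] Msg_Decide_V1[OF assms] disjoint_M0_M1
    by (cases v) (auto simp: disjoint_iff)
next
  case Noop
  then show ?thesis using Msg_Noop[OF assms] disjoint_M1_M2 by (auto simp: disjoint_iff)
qed

lemma received_in_M0_iff: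
  "i \<in> Agt n \<Longrightarrow> received n C P r m i j \<in> Some ` M0 \<longleftrightarrow>
     j \<in> Agt n \<and> snd (fst r) m j i \<and> P j (loc r j m) = Decide V0"
  by (auto simp: received_def Msg_in_M0_iff)

lemma received_in_M1_iff:
  "i \<in> Agt n \<Longrightarrow> received n C P r m i j \<in> Some ` M1 \<longleftrightarrow>
     j \<in> Agt n \<and> snd (fst r) m j i \<and> P j (loc r j m) = Decide V1"
  by (auto simp: received_def Msg_in_M1_iff)

lemma Decide_V1_imp:
  assumes "r \<in> R" "i \<in> Agt n" "P i (loc r i m) = Decide V1"
  shows "linit C (loc r i m) = V1" "j \<in> Agt n \<Longrightarrow> P j (loc r j m) \<noteq> Decide V0"
  using assms P_eq_P0[of r i m] deciding_iff[of r j V0 m]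
  by (auto simp: P0_eq_Decide_V1_iff dest: KnD)

lemma Decide_V0_propagates:
  assumes r: "r \<in> R" and j: "j \<in> Agt n" and dec: "P j (loc r j (Suc m)) = Decide V0"
  shows "\<exists>k\<in>Agt n. P k (loc r k m) = Decide V0"
proof (cases "linit C (loc r j (Suc m)) = V0")
  case True
  \<comment> \<open>then j would already have decided 0 at time 0\<close>
  then have "P j (loc r j 0) = Decide V0"
    using linit_loc[OF r j, of "Suc m"] ldecided_loc_0[OF r j] P_eq_P0[OF r j, of 0]
    by (simp add: P0_eq_Decide_V0_iff)
  then show ?thesis using decide_at_most_once[OF r j _ dec] by blast
next
  case False
  then have "Kn R j (\<lambda>r m. \<exists>j\<in>Agt n. jdecided C j V0 r m) (loc r j (Suc m))"
    using dec P_eq_P0[OF r j] by (simp add: P0_eq_Decide_V0_iff)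
  then have "\<exists>k\<in>Agt n. jdecided C k V0 r (Suc m)" using KnD r by fastforce
  then show ?thesis using jdecided_Suc_iff[OF r] by blast
qed

lemma Decide_V0_chain:
  "r \<in> R \<Longrightarrow> j \<in> Agt n \<Longrightarrow> P j (loc r j m) = Decide V0 \<Longrightarrow> m' \<le> m \<Longrightarrow>
     \<exists>k\<in>Agt n. P k (loc r k m') = Decide V0"
proof (induction m arbitrary: j)
  case (Suc m)
  show ?case
  proof (cases "m' = Suc m")
    case False
    then have "m' \<le> m" using Suc.prems(4) by simp
    moreover obtain k where "k \<in> Agt n" "P k (loc r k m) = Decide V0"
      using Decide_V0_propagates[OF Suc.prems(1-3)] by blast
    ultimately show ?thesis using Suc.IH[OF Suc.prems(1)] by blast
  qed (use Suc.prems in blast)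
qed auto

lemma Decide_V0_at_0_imp_init:
  assumes "r \<in> R" "k \<in> Agt n" "P k (loc r k 0) = Decide V0"
  shows "linit C (loc r k 0) = V0"
  using assms P_eq_P0[of r k 0] by (auto simp: P0_eq_Decide_V0_iff jdecided_def dest: KnD)

lemma lrd_V0_imp_Decide_V0:
  assumes r: "r \<in> R" and i: "i \<in> Agt n" and rd: "lrd C (loc r i (Suc m)) = Some V0"
  shows "\<exists>j\<in>Agt n. P j (loc r j m) = Decide V0"
proof -
  have "\<exists>j\<in>Agt n. received n C P r m i j \<in> Some ` M0"
  proof (rule ccontr)
    assume none: "\<not> ?thesis"
    show False
    proof (cases "\<exists>j\<in>Agt n. received n C P r m i j \<in> Some ` M1")
      case True
      then show False using lrd_Trans_V1[OF i True none] rd by (simp add: loc_Suc[OF r])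
    next
      case False
      then show False using lrd_Trans_None[OF i none False] rd by (simp add: loc_Suc[OF r])
    qed
  qed
  then show ?thesis using received_in_M0_iff[OF i] by blast
qed

text \<open>The knowledge test is met because rd = 0 is part of the local state and can only be set
  by a fresh 0-decision.\<close>
lemma heard_V0_decides_V0:
  assumes r: "r \<in> R" and i: "i \<in> Agt n"
    and rd: "lrd C (loc r i m) = Some V0" and undecided: "ldecided C (loc r i m) = None"
  shows "P i (loc r i m) = Decide V0"
proof -
  have "Kn R i (\<lambda>r m. \<exists>j\<in>Agt n. jdecided C j V0 r m) (loc r i m)"
    unfolding Kn_def
  proof (intro ballI allI impI)
    fix r' m' assume r': "r' \<in> R" and same: "loc r' i m' = loc r i m"
    then obtain m'' where "m' = Suc m''" using rd lrd_loc_0[OF r' i] by (cases m') auto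
    then show "\<exists>j\<in>Agt n. jdecided C j V0 r' m'"
      using lrd_V0_imp_Decide_V0[OF r' i] rd same r' by (auto simp: jdecided_Suc_iff)
  qed
  then show ?thesis using undecided P_eq_P0[OF r i] by (simp add: P0_eq_Decide_V0_iff)
qed

lemma nonfaulty_Decide_V0_heard:
  assumes r: "r \<in> R" and i: "i \<in> Agt n" and k: "k \<in> Agt n \<inter> nonfaulty r"
    and dec: "P k (loc r k m) = Decide V0" and undecided: "ldecided C (loc r i (Suc m)) = None"
  shows "P i (loc r i (Suc m)) = Decide V0"
proof -
  have "received n C P r m i k \<in> Some ` M0"
    using i k dec nonfaulty_delivers[OF r] by (simp add: received_in_M0_iff)
  moreover have "\<not> (\<exists>j\<in>Agt n. received n C P r m i j \<in> Some ` M1)"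
    using i k dec Decide_V1_imp(2)[OF r] by (auto simp: received_in_M1_iff)
  ultimately have "lrd C (loc r i (Suc m)) = Some V0"
    using i k by (auto simp: loc_Suc[OF r] intro: lrd_Trans_V0)
  then show ?thesis using heard_V0_decides_V0[OF r i _ undecided] by blast
qed

lemma Decide_imp_some_init:
  assumes r: "r \<in> R" and i: "i \<in> Agt n" and dec: "P i (loc r i m) = Decide v"
  shows "\<exists>j\<in>Agt n. linit C (loc r j 0) = v"
proof (cases v)
  case V0
  then obtain k where "k \<in> Agt n" "P k (loc r k 0) = Decide V0"
    using Decide_V0_chain[OF r i] dec by blast
  then show ?thesis using Decide_V0_at_0_imp_init[OF r] V0 by blast
next
  case V1
  then show ?thesis using Decide_V1_imp(1)[OF r i] dec linit_loc[OF r i, of m] i by metis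
qed

lemma nonfaulty_Decide_V0_excludes_V1:
  assumes r: "r \<in> R" and i: "i \<in> Agt n" and j: "j \<in> Agt n \<inter> nonfaulty r"
    and dec0: "P j (loc r j b) = Decide V0" and dec1: "P i (loc r i a) = Decide V1"
  shows False
proof (cases "a \<le> b")
  case True
  then show False using Decide_V0_chain[OF r _ dec0 True] Decide_V1_imp(2)[OF r i dec1] j by blast
next
  case False
  then have "ldecided C (loc r i (Suc b)) = None"
    using ldecided_mono[OF r i, of "Suc b" a] undecided_if_Decide[OF r i dec1] by fastforce
  then have "P i (loc r i (Suc b)) = Decide V0" by (rule nonfaulty_Decide_V0_heard[OF r i j dec0])
  then show False using decide_at_most_once[OF r i _ dec1] dec1 by auto
qed

text \<open>Pigeonhole: since each agent decides at most once, deciders in t+1 distinct rounds are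
  t+1 distinct agents.\<close>
lemma nonfaulty_among_deciders:
  assumes r: "r \<in> R" and deciders: "\<forall>m\<le>t. \<exists>k\<in>Agt n. P k (loc r k m) = Decide V0"
  shows "\<exists>m\<le>t. \<exists>k\<in>Agt n \<inter> nonfaulty r. P k (loc r k m) = Decide V0"
proof (rule ccontr)
  assume none: "\<not> ?thesis"
  obtain f where f: "\<And>m. m \<le> t \<Longrightarrow> f m \<in> Agt n \<and> P (f m) (loc r (f m) m) = Decide V0"
    using deciders by metis
  have "inj_on f {..t}"
    by (rule inj_onI) (metis f atMost_iff decide_at_most_once[OF r])
  then have "card (f ` {..t}) = Suc t" by (simp add: card_image)
  moreover have "f ` {..t} \<subseteq> Agt n - nonfaulty r" using f none by fastforce
  then have "card (f ` {..t}) \<le> card (Agt n - nonfaulty r)"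
    by (intro card_mono) (simp_all add: Agt_def)
  ultimately show False using card_faulty_le[OF r] by simp
qed

text \<open>The 0-chain below such a decision contains a nonfaulty agent, whose 0-message reaches
  everybody by time t+1.\<close>
lemma Decide_V0_at_Suc_t_forces_decision:
  assumes r: "r \<in> R" and i: "i \<in> Agt n" and j: "j \<in> Agt n"
    and dec: "P j (loc r j (Suc t)) = Decide V0"
  shows "ldecided C (loc r i (Suc (Suc t))) \<noteq> None"
proof -
  have "\<forall>m\<le>t. \<exists>k\<in>Agt n. P k (loc r k m) = Decide V0"
    using Decide_V0_chain[OF r j dec] by auto
  then obtain m k where m: "m \<le> t" and k: "k \<in> Agt n \<inter> nonfaulty r"
    and dec_k: "P k (loc r k m) = Decide V0"
    using nonfaulty_among_deciders[OF r] by blast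
  have "ldecided C (loc r i (Suc (Suc m))) \<noteq> None"
  proof (cases "ldecided C (loc r i (Suc m)) = None")
    case True
    then show ?thesis
      using nonfaulty_Decide_V0_heard[OF r i k dec_k] by (simp add: ldecided_loc_Suc[OF r i])
  next
    case False
    then show ?thesis using ldecided_mono[OF r i False, of "Suc (Suc m)"] by simp
  qed
  then show ?thesis using ldecided_mono[OF r i, of "Suc (Suc m)" "Suc (Suc t)"] m by simp
qed

lemma decided_by_t_plus_2:
  assumes r: "r \<in> R" and i: "i \<in> Agt n"
  shows "\<exists>m\<le>Suc t. \<exists>v. P i (loc r i m) = Decide v"
proof (rule ccontr)
  assume not_deciding: "\<not> ?thesis"
  define s where "s = loc r i (Suc t)"
  have undecided: "ldecided C s = None"
    using decided_imp_Decide_before[OF r i] not_deciding unfolding s_def by fastforce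
  have idle: "P i s = Noop"
    using not_deciding unfolding s_def by (metis act.exhaust order_refl)
  then have "\<not> Kn R i (\<lambda>r m. \<forall>j\<in>Agt n. \<not> deciding C j V0 r m) s"
    using undecided P_eq_P0[OF r i] unfolding s_def by (simp add: P0_eq_Noop_iff)
  then obtain r' m' j where r': "r' \<in> R" and same: "loc r' i m' = s"
    and j: "j \<in> Agt n" and deciding: "deciding C j V0 r' m'"
    unfolding Kn_def by blast
  have "m' = Suc t"
    using ltime_loc[OF r' i, of m'] ltime_loc[OF r i, of "Suc t"] same unfolding s_def by simp
  then have "ldecided C (loc r' i (Suc (Suc t))) \<noteq> None"
    using Decide_V0_at_Suc_t_forces_decision[OF r' i j] deciding_iff[OF r' j] deciding by simp
  then show False
    using same undecided idle \<open>m' = Suc t\<close> by (simp add: ldecided_loc_Suc[OF r' i])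
qed

lemma decides_unique:
  "r \<in> R \<Longrightarrow> i \<in> Agt n \<Longrightarrow> decides P r i v k \<Longrightarrow> decides P r i w k' \<Longrightarrow> w = v"
  using decide_at_most_once[of r i "k - 1" v "k' - 1" w] by (auto simp: decides_def)

lemma decides_agree:
  assumes "r \<in> R" "i \<in> Agt n \<inter> nonfaulty r" "j \<in> Agt n \<inter> nonfaulty r"
    and "decides P r i v k" "decides P r j w k'"
  shows "v = w"
  using assms nonfaulty_Decide_V0_excludes_V1[of r i j "k' - 1" "k - 1"]
    nonfaulty_Decide_V0_excludes_V1[of r j i "k - 1" "k' - 1"]
  by (cases v; cases w) (auto simp: decides_def)

lemma decides_valid:
  "r \<in> R \<Longrightarrow> i \<in> Agt n \<Longrightarrow> decides P r i v k \<Longrightarrow> \<exists>j\<in>Agt n. linit C (loc r j 0) = v"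
  unfolding decides_def using Decide_imp_some_init by blast

lemma decides_by_t_plus_2:
  assumes "r \<in> R" "i \<in> Agt n"
  shows "\<exists>k\<le>t + 2. \<exists>v. decides P r i v k"
proof -
  obtain m v where "m \<le> Suc t" "P i (loc r i m) = Decide v"
    using decided_by_t_plus_2[OF assms] by blast
  then show ?thesis unfolding decides_def by (intro exI[of _ "Suc m"]) auto
qed

end

lemma eba_system_if_eba_ctx:
  assumes "is_eba_ctx n C" "FM C \<subseteq> SO n t" "implements n C P"
  obtains M0 M1 M2 where "eba_system n t C P M0 M1 M2"
  using assms(1) unfolding is_eba_ctx_def
  apply (elim exE)
  subgoal for M0 M1 M2
    by (intro that[of M0 M1 M2] eba_system.intro) (simp_all add: assms(2,3))
  done

theorem mainTheorem1:
  fixes n t :: nat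
    and C :: "('s, 'm) eba_ctx"
    and P :: "agent \<Rightarrow> 's \<Rightarrow> act"
  assumes "t < n"
    and "is_eba_ctx n C"
    and "FM C \<subseteq> SO n t"
    and "implements n C P"
  shows "is_EBA_protocol n C P
         \<and> (\<forall>r\<in>runs n C P. \<forall>i\<in>Agt n \<inter> nonfaulty r. \<exists>k\<le>t + 2. \<exists>v. decides P r i v k)
         \<and> (\<forall>r\<in>runs n C P. \<forall>i\<in>Agt n. \<forall>v k.
               decides P r i v k \<longrightarrow> (\<exists>j\<in>Agt n. linit C (loc r j 0) = v))"
proof -
  obtain M0 M1 M2 where "eba_system n t C P M0 M1 M2"
    using eba_system_if_eba_ctx assms(2-4) .
  then interpret eba_system n t C P M0 M1 M2 .
  show ?thesis
    unfolding is_EBA_protocol_def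
    by (intro conjI ballI allI impI; (elim IntE conjE)?)
      (blast intro: decides_unique decides_agree decides_valid dest: decides_by_t_plus_2)+
qed

end
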